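(* In the setting below, let $(\hat\beta,\beta^\star)\in[0,\infty)^2$ with $\hat\beta<\beta^\star$. Then $\|\alpha\xi^*\|^2_{\mathbb H^2_{T,\hat\beta}}\le\frac{(1+\beta^\star\Phi)(1+\hat\beta\Phi)}{\beta^\star-\hat\beta}\,\mathbb E\Big[\sup_{s\in[0,\infty]}\mathcal E(\beta^\star A)_s(\xi^+_s)^2\mathbf 1_{\{s<T\}}\Big]$. In particular, if the right-hand side expectation is finite, so is $\|\alpha\xi^*\|_{\mathbb H^2_{T,\hat\beta}}$.
   Context: Setting. $(\Omega,\mathcal F,\mathbb P)$ is a probability space with a right-continuous filtration $\mathbb G$, $\mathcal G_\infty:=\sigma(\bigcup_t\mathcal G_t)$ whose universal completion is contained in $\mathcal F$; all notions refer to $\mathbb G$, $\mathbb P$. $T$ is a stopping time. $C$ is a predictable real-valued process with a.s. right-continuous non-decreasing paths and $C_0=0$; $\alpha$ is a nonnegative predictable process with $\alpha>0$ $\mathbb P\otimes dC$-a.e. on $\{t\le T\}$ such that $A_t:=\int_0^{t\wedge T}\alpha_s^2dC_s$ is real-valued and $\Delta A\le\Phi$ up to evanescence for a constant $\Phi\in[0,\infty)$. For $\beta\ge0$, $\mathcal E(\beta A)_t:=e^{\beta A_t}\prod_{0<s\le t}(1+\beta\Delta A_s)e^{-\beta\Delta A_s}$. $\xi=(\xi_t)_{t\in[0,\infty]}$ is an optional $[-\infty,\infty)$-valued process; $\xi^*_0:=0$ and $\xi^*_t:=\lim_{t'\uparrow\uparrow t}\sup_{s\in[t',\infty]}\xi^+_s\mathbf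 1_{\{s<T\}}$ for $t\in(0,\infty]$. For a process $\phi$, $\|\phi\|^2_{\mathbb H^2_{T,\beta}}:=\mathbb E\int_0^T\mathcal E(\beta A)_s|\phi_s|^2dC_s$ (integral over $(0,T]$), so that $\|\alpha\xi^*\|^2_{\mathbb H^2_{T,\beta}}=\mathbb E\int_0^T\mathcal E(\beta A)_s|\xi^*_s|^2dA_s$. *)

theory Defs
  imports "HOL-Probability.Probability"
begin

text \<open>Time index: [0,\<infinity>) is represented by nonnegative reals; the value \<infinity> of a
  stopping time is represented in ereal.  A filtration is G :: real \<Rightarrow> 'a measure.\<close>

definition filtration_on :: "'a measure \<Rightarrow> (real \<Rightarrow> 'a measure) \<Rightarrow> bool" where
  "filtration_on M G \<longleftrightarrow>
     (\<forall>t\<ge>0. space (G t) = space M \<and> sets (G t) \<subseteq> sets M) \<and>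
     (\<forall>s t. 0 \<le> s \<longrightarrow> s \<le> t \<longrightarrow> sets (G s) \<subseteq> sets (G t))"

definition right_continuous_filtration :: "(real \<Rightarrow> 'a measure) \<Rightarrow> bool" where
  "right_continuous_filtration G \<longleftrightarrow> (\<forall>t\<ge>0. sets (G t) = (\<Inter>u\<in>{t<..}. sets (G u)))"

definition G_infty :: "'a measure \<Rightarrow> (real \<Rightarrow> 'a measure) \<Rightarrow> 'a measure" where
  "G_infty M G = sigma (space M) (\<Union>t\<in>{0..}. sets (G t))"

definition universal_completion_sets :: "'a measure \<Rightarrow> 'a set set" where
  "universal_completion_sets N =
     (\<Inter>{sets (completion P) | P. sets P = sets N \<and> prob_space P})"

definition stopping_time_on :: "'a measure \<Rightarrow> (real \<Rightarrow> 'a measure) \<Rightarrow> ('a \<Rightarrow> ereal) \<Rightarrow> bool" where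
  "stopping_time_on M G T \<longleftrightarrow>
     (\<forall>\<omega>\<in>space M. 0 \<le> T \<omega>) \<and> (\<forall>t\<ge>0. {\<omega>\<in>space M. T \<omega> \<le> ereal t} \<in> sets (G t))"

definition predictable_sigma :: "'a measure \<Rightarrow> (real \<Rightarrow> 'a measure) \<Rightarrow> (real \<times> 'a) measure" where
  "predictable_sigma M G = sigma ({0..} \<times> space M)
     ({{0} \<times> B | B. B \<in> sets (G 0)} \<union>
      {{s<..t} \<times> B | s t B. 0 \<le> s \<and> s \<le> t \<and> B \<in> sets (G s)})"

definition optional_sigma :: "'a measure \<Rightarrow> (real \<Rightarrow> 'a measure) \<Rightarrow> (real \<times> 'a) measure" where
  "optional_sigma M G = sigma ({0..} \<times> space M)
     {{(t, \<omega>). 0 \<le> t \<and> \<omega> \<in> space M \<and> S \<omega> \<le> ereal t} | S. stopping_time_on M G S}"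

definition predictable :: "'a measure \<Rightarrow> (real \<Rightarrow> 'a measure) \<Rightarrow> (real \<Rightarrow> 'a \<Rightarrow> real) \<Rightarrow> bool" where
  "predictable M G X \<longleftrightarrow> (\<lambda>(t, \<omega>). X t \<omega>) \<in> measurable (predictable_sigma M G) borel"

definition optional_ereal :: "'a measure \<Rightarrow> (real \<Rightarrow> 'a measure) \<Rightarrow> (real \<Rightarrow> 'a \<Rightarrow> ereal) \<Rightarrow> bool" where
  "optional_ereal M G X \<longleftrightarrow> (\<lambda>(t, \<omega>). X t \<omega>) \<in> measurable (optional_sigma M G) borel"

text \<open>the path of C, extended by 0 to negative times (so dC has no mass on (-\<infinity>,0])\<close>
definition path :: "(real \<Rightarrow> 'a \<Rightarrow> real) \<Rightarrow> 'a \<Rightarrow> real \<Rightarrow> real" where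
  "path C \<omega> t = (if t < 0 then 0 else C t \<omega>)"

definition dC :: "(real \<Rightarrow> 'a \<Rightarrow> real) \<Rightarrow> 'a \<Rightarrow> real measure" where
  "dC C \<omega> = interval_measure (path C \<omega>)"

definition A_enn :: "(real \<Rightarrow> 'a \<Rightarrow> real) \<Rightarrow> (real \<Rightarrow> 'a \<Rightarrow> real) \<Rightarrow> ('a \<Rightarrow> ereal) \<Rightarrow> real \<Rightarrow> 'a \<Rightarrow> ennreal" where
  "A_enn C \<alpha> T t \<omega> =
     (\<integral>\<^sup>+ s. ennreal ((\<alpha> s \<omega>)\<^sup>2) * indicator {s. 0 < s \<and> s \<le> t \<and> ereal s \<le> T \<omega>} s \<partial>dC C \<omega>)"

definition A_proc :: "(real \<Rightarrow> 'a \<Rightarrow> real) \<Rightarrow> (real \<Rightarrow> 'a \<Rightarrow> real) \<Rightarrow> ('a \<Rightarrow> ereal) \<Rightarrow> real \<Rightarrow> 'a \<Rightarrow> real" where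
  "A_proc C \<alpha> T t \<omega> = enn2real (A_enn C \<alpha> T t \<omega>)"

text \<open>jump \<Delta>X_t = X_t - X_{t-} of a nondecreasing process (X_{0-} = X_0)\<close>
definition jump :: "(real \<Rightarrow> 'a \<Rightarrow> real) \<Rightarrow> real \<Rightarrow> 'a \<Rightarrow> real" where
  "jump X t \<omega> = (if t \<le> 0 then 0 else X t \<omega> - (SUP s\<in>{0..<t}. X s \<omega>))"

text \<open>Dol\'eans-Dade exponential of \<beta>A for nondecreasing A:
  e^{\<beta>A_t} \<Prod>_{0<s\<le>t} (1+\<beta>\<Delta>A_s) e^{-\<beta>\<Delta>A_s}; the (unordered) infinite product of factors
  in (0,1] is the infimum of its finite partial products.\<close>
definition stoch_exp :: "real \<Rightarrow> (real \<Rightarrow> 'a \<Rightarrow> real) \<Rightarrow> real \<Rightarrow> 'a \<Rightarrow> real" where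
  "stoch_exp \<beta> X t \<omega> = exp (\<beta> * X t \<omega>) *
     (INF F\<in>{F. finite F \<and> F \<subseteq> {0<..t}}.
        \<Prod>s\<in>F. (1 + \<beta> * jump X s \<omega>) * exp (- \<beta> * jump X s \<omega>))"

text \<open>\<xi>^+_s 1_{s<T} (the value at s = \<infinity> vanishes since never \<infinity> < T)\<close>
definition xi_pos_before :: "(real \<Rightarrow> 'a \<Rightarrow> ereal) \<Rightarrow> ('a \<Rightarrow> ereal) \<Rightarrow> real \<Rightarrow> 'a \<Rightarrow> ennreal" where
  "xi_pos_before \<xi> T s \<omega> = (if ereal s < T \<omega> then e2ennreal (\<xi> s \<omega>) else 0)"

text \<open>\<xi>^*_0 = 0, \<xi>^*_t = lim_{t' \<up>\<up> t} sup_{s\<in>[t',\<infinity>]} \<xi>^+_s 1_{s<T}; the sup is nonincreasing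
  in t', so the limit is the infimum over t' < t.\<close>
definition xi_star :: "(real \<Rightarrow> 'a \<Rightarrow> ereal) \<Rightarrow> ('a \<Rightarrow> ereal) \<Rightarrow> real \<Rightarrow> 'a \<Rightarrow> ennreal" where
  "xi_star \<xi> T t \<omega> = (if t \<le> 0 then 0 else
     (INF t'\<in>{0..<t}. SUP s\<in>{t'..}. xi_pos_before \<xi> T s \<omega>))"

definition H2_norm_sq :: "'a measure \<Rightarrow> (real \<Rightarrow> 'a \<Rightarrow> real) \<Rightarrow> ('a \<Rightarrow> ereal) \<Rightarrow> (real \<Rightarrow> 'a \<Rightarrow> real)
    \<Rightarrow> real \<Rightarrow> (real \<Rightarrow> 'a \<Rightarrow> ennreal) \<Rightarrow> ennreal" where
  "H2_norm_sq M C T A \<beta> \<phi> =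
     (\<integral>\<^sup>+ \<omega>. (\<integral>\<^sup>+ s. ennreal (stoch_exp \<beta> A s \<omega>) * (\<phi> s \<omega>)\<^sup>2
                  * indicator {s. 0 < s \<and> ereal s \<le> T \<omega>} s \<partial>dC C \<omega>) \<partial>M)"

end

theory Submission
  imports Defs
begin

text \<open>Fix \<omega>, let f be the path of A, and write E1, E2 for the Doleans-Dade exponentials of
  \<beta>hat f and \<beta>star f.  On the dyadic grid t_i = i/2^n the exponentials factor over the cells, and
  comparing their increments jump by jump gives, with \<Psi> = E1/E2,
    (\<beta>star - \<beta>hat) E1(t_i)/E2(t_(i+1)) (f(t_(i+1)) - f(t_i)) \<le> \<Psi>(t_i) - \<Psi>(t_(i+1)),
  so by telescoping the weights E1(t_i)/E2(t_(i+1)) integrate dA to at most 1/(\<beta>star - \<beta>hat).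

  Pointwise, if s lies in the cell (t_i, t_(i+1)] of a fine enough grid, then by right-continuity
  the increment of f over the cell is the jump at s, which is at most \<Phi>, up to an arbitrarily small
  error; hence E1(s) E2(t_(i+1)) \<le> (1 + \<beta>star \<Phi>)(1 + \<beta>hat \<Phi>) e^\<epsilon> E1(t_i) E2(t_i), while
  E2(t_i) (\<xi>*_s)^2 \<le> sup_u E2(u) (\<xi>+_u)^2 because E2 is nondecreasing and t_i < s.  The dyadic
  integrands increase with n, so monotone convergence combines the two estimates for every \<omega>,
  and integrating over \<omega> gives the theorem.\<close>

lemma le_cINF_mult_right:
  fixes x c :: real
  assumes "S \<noteq> {}" "0 \<le> c" "\<And>F. F \<in> S \<Longrightarrow> x \<le> g F * c"
  shows "x \<le> (INF F\<in>S. g F) * c"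
proof (cases "c = 0")
  case True
  then show ?thesis using assms by auto
next
  case False
  then have "x / c \<le> (INF F\<in>S. g F)"
    using assms by (intro cINF_greatest) (auto simp: divide_le_eq)
  then show ?thesis using False assms(2) by (simp add: divide_le_eq)
qed

lemma exp_prod_increment_ge:
  fixes x :: "real \<Rightarrow> real"
  assumes "finite F" "\<forall>s\<in>F. 0 \<le> x s" "0 \<le> c" "0 \<le> b1" "b1 \<le> b2"
  shows "(b2 - b1) * (c + (\<Sum>s\<in>F. x s)) \<le>
      exp (b2 * c) * (\<Prod>s\<in>F. 1 + b2 * x s) - exp (b1 * c) * (\<Prod>s\<in>F. 1 + b1 * x s)
    \<and> 1 \<le> exp (b1 * c) * (\<Prod>s\<in>F. 1 + b1 * x s)"
  using assms(1,2)
proof (induction F rule: finite_induct)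
  case empty
  have e1: "1 \<le> exp (b1 * c)" using assms by simp
  have "exp (b1 * c) * (1 + (b2 - b1) * c) \<le> exp (b1 * c) * exp ((b2 - b1) * c)"
    by (intro mult_left_mono exp_ge_add_one_self) auto
  also have "\<dots> = exp (b2 * c)" by (simp add: exp_add[symmetric] algebra_simps)
  finally have "exp (b1 * c) + exp (b1 * c) * ((b2 - b1) * c) \<le> exp (b2 * c)"
    by (simp add: algebra_simps)
  moreover have "(b2 - b1) * c \<le> exp (b1 * c) * ((b2 - b1) * c)"
    using e1 assms mult_right_mono[OF e1, of "(b2 - b1) * c"] by simp
  ultimately show ?case using e1 by simp
next
  case (insert y F)
  define q where "q = exp (b2 * c) * (\<Prod>s\<in>F. 1 + b2 * x s)"
  define r where "r = exp (b1 * c) * (\<Prod>s\<in>F. 1 + b1 * x s)"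
  have IH: "(b2 - b1) * (c + (\<Sum>s\<in>F. x s)) \<le> q - r" "1 \<le> r"
    using insert by (auto simp: q_def r_def)
  have xy: "0 \<le> x y" and "0 \<le> (\<Sum>s\<in>F. x s)"
    using insert by (auto intro: sum_nonneg)
  then have "0 \<le> b2 * (q - r)"
    using IH assms by (smt (verit) mult_nonneg_nonneg)
  moreover have "(b2 - b1) * 1 \<le> (b2 - b1) * r"
    using IH assms by (intro mult_left_mono) auto
  moreover have "b2 * q - b1 * r = (b2 - b1) * r + b2 * (q - r)"
    by (simp add: algebra_simps)
  ultimately have "(b2 - b1) * 1 \<le> b2 * q - b1 * r" by linarith
  then have "x y * (b2 - b1) \<le> x y * (b2 * q - b1 * r)"
    using xy by (intro mult_left_mono) auto
  then have "(b2 - b1) * (c + (\<Sum>s\<in>insert y F. x s)) \<le> (1 + b2 * x y) * q - (1 + b1 * x y) * r"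
    using insert IH by (simp add: algebra_simps)
  moreover have "1 * 1 \<le> (1 + b1 * x y) * r"
    using IH xy assms by (intro mult_mono) auto
  ultimately show ?case
    using insert by (simp add: q_def r_def algebra_simps)
qed

lemma power2_SUP_ennreal:
  fixes g :: "'a \<Rightarrow> ennreal"
  assumes "A \<noteq> {}"
  shows "(SUP x\<in>A. g x)\<^sup>2 = (SUP x\<in>A. (g x)\<^sup>2)"
proof -
  have "mono (\<lambda>x::ennreal. x\<^sup>2)" by (intro monoI power_mono) auto
  moreover have "continuous (at_left x) (\<lambda>x::ennreal. x\<^sup>2)" for x
    unfolding continuous_within power2_eq_square
    by (intro tendsto_mult_ennreal tendsto_ident_at) auto
  ultimately have "(\<lambda>x. x\<^sup>2) (Sup (g ` A)) = Sup ((\<lambda>x. x\<^sup>2) ` g ` A)"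
    using assms by (intro continuous_at_Sup_mono) auto
  then show ?thesis by (simp add: image_image)
qed

lemma ennreal_le_of_le_exp_mult:
  fixes x W :: ennreal
  assumes c: "0 \<le> c" and le: "\<And>\<epsilon>. 0 < \<epsilon> \<Longrightarrow> x \<le> ennreal (c * exp \<epsilon>) * W"
  shows "x \<le> ennreal c * W"
proof (cases "c = 0")
  case True
  then show ?thesis using le[of 1] by simp
next
  case False
  have "((\<lambda>\<epsilon>. ennreal (c * exp \<epsilon>) * W) \<longlongrightarrow> ennreal (c * exp 0) * W) (at_right 0)"
    using False c by (intro tendsto_mult_ennreal tendsto_ennrealI tendsto_intros) auto
  moreover have "\<forall>\<^sub>F \<epsilon> in at_right 0. x \<le> ennreal (c * exp \<epsilon>) * W"
    using le eventually_at_right_less[of "0::real"] by (auto elim: eventually_mono)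
  ultimately show ?thesis by (auto intro: tendsto_lowerbound)
qed

text \<open>Unlike nn_integral_cmult this needs no measurability of f: the integrands
  in \<omega> below are not known to be measurable.\<close>

lemma nn_integral_cmult_le:
  fixes c :: ennreal
  assumes c: "c < \<infinity>"
  shows "(\<integral>\<^sup>+ x. c * f x \<partial>M) \<le> c * integral\<^sup>N M f"
proof (cases "c = 0")
  case True then show ?thesis by simp
next
  case False
  show ?thesis
    unfolding nn_integral_def[of M "\<lambda>x. c * f x"]
  proof (rule SUP_least)
    fix g assume g: "g \<in> {g. simple_function M g \<and> g \<le> (\<lambda>x. c * f x)}"
    define g' where "g' x = g x / c" for x
    have sg': "simple_function M g'" unfolding g'_def using g by (auto intro: simple_function_compose1)
    have gg: "g x = c * g' x" for x
      unfolding g'_def ennreal_times_divide using ennreal_mult_divide_eq[of c "g x"] False c by (simp add: mult.commute)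
    have cpos: "0 < c" using False by (metis not_gr_zero)
    have le: "g' x \<le> f x" for x
      unfolding g'_def by (rule divide_le_posI_ennreal[OF cpos]) (use g in \<open>auto simp: le_fun_def\<close>)
    have geq: "g = (\<lambda>x. c * g' x)" using gg by (rule ext)
    have "integral\<^sup>S M g = c * integral\<^sup>S M g'"
      unfolding geq by (rule simple_integral_mult[OF sg'])
    also have "\<dots> = c * integral\<^sup>N M g'" using nn_integral_eq_simple_integral[OF sg'] by simp
    also have "\<dots> \<le> c * integral\<^sup>N M f" using le by (intro mult_left_mono nn_integral_mono) auto
    finally show "integral\<^sup>S M g \<le> c * integral\<^sup>N M f" .
  qed
qed

section \<open>The Doleans-Dade exponential of a nondecreasing path\<close>

definition path_jump :: "(real \<Rightarrow> real) \<Rightarrow> real \<Rightarrow> real" where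
  "path_jump f s = (if s \<le> 0 then 0 else f s - (SUP u\<in>{0..<s}. f u))"

definition jump_factor :: "real \<Rightarrow> (real \<Rightarrow> real) \<Rightarrow> real \<Rightarrow> real" where
  "jump_factor \<beta> f s = (1 + \<beta> * path_jump f s) * exp (- \<beta> * path_jump f s)"

definition jump_product :: "real \<Rightarrow> (real \<Rightarrow> real) \<Rightarrow> real set \<Rightarrow> real" where
  "jump_product \<beta> f I = (INF F\<in>{F. finite F \<and> F \<subseteq> I}. \<Prod>s\<in>F. jump_factor \<beta> f s)"

definition doleans_exp :: "real \<Rightarrow> (real \<Rightarrow> real) \<Rightarrow> real \<Rightarrow> real" where
  "doleans_exp \<beta> f t = exp (\<beta> * f t) * jump_product \<beta> f {0<..t}"

definition doleans_exp_ratio :: "real \<Rightarrow> (real \<Rightarrow> real) \<Rightarrow> real \<Rightarrow> real \<Rightarrow> real" where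
  "doleans_exp_ratio \<beta> f a b = exp (\<beta> * (f b - f a)) * jump_product \<beta> f {a<..b}"

lemma jump_eq_path_jump: "jump X s \<omega> = path_jump (\<lambda>t. X t \<omega>) s"
  unfolding jump_def path_jump_def by simp

lemma stoch_exp_eq_doleans_exp: "stoch_exp \<beta> X t \<omega> = doleans_exp \<beta> (\<lambda>t. X t \<omega>) t"
  unfolding stoch_exp_def doleans_exp_def jump_product_def jump_factor_def jump_eq_path_jump by simp

lemma jump_product_empty: "jump_product \<beta> f {} = 1"
proof -
  have "{F. finite F \<and> F \<subseteq> ({}::real set)} = {{}}" by auto
  then show ?thesis unfolding jump_product_def by simp
qed

context
  fixes f :: "real \<Rightarrow> real"
  assumes mono: "mono_on {0..} f"
begin

lemma bdd_above_left_values: "0 < s \<Longrightarrow> bdd_above (f ` {0..<s})"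
  using mono_onD[OF mono] by (intro bdd_aboveI2[where M = "f s"]) auto

lemma path_jump_nonneg: "0 \<le> path_jump f s"
  unfolding path_jump_def using mono_onD[OF mono]
  by (auto intro!: cSUP_least)

lemma path_jump_le_diff: "0 \<le> t \<Longrightarrow> t < s \<Longrightarrow> path_jump f s \<le> f s - f t"
  unfolding path_jump_def using bdd_above_left_values[of s]
  by (auto intro!: cSUP_upper)

lemma sum_path_jump_le:
  assumes "finite F" "F \<subseteq> {a<..b}" "0 \<le> a" "a \<le> b"
  shows "(\<Sum>s\<in>F. path_jump f s) \<le> f b - f a"
  using assms
proof (induction F arbitrary: b rule: finite_linorder_max_induct)
  case empty
  then show ?case using mono_onD[OF mono, of a b] by simp
next
  case (insert m F)
  \<comment> \<open>the jump at the largest point is charged to the increment over [max(a, max F), m]\<close>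
  define t where "t = Max (insert a F)"
  have t: "a \<le> t" "t < m" "F \<subseteq> {a<..t}"
    using insert by (auto simp: t_def)
  have "(\<Sum>s\<in>insert m F. path_jump f s) = path_jump f m + (\<Sum>s\<in>F. path_jump f s)"
    using insert by (subst sum.insert) auto
  also have "\<dots> \<le> (f m - f t) + (f t - f a)"
    using path_jump_le_diff[of t m] insert.IH[of t] t insert.prems by auto
  also have "\<dots> \<le> f b - f a"
    using mono_onD[OF mono, of m b] t insert.prems by auto
  finally show ?case .
qed

lemma jump_factor_bounds:
  assumes "0 \<le> \<beta>"
  shows "0 < jump_factor \<beta> f s" "jump_factor \<beta> f s \<le> 1"
    "exp (- \<beta> * path_jump f s) \<le> jump_factor \<beta> f s"
proof -
  have x: "0 \<le> \<beta> * path_jump f s"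
    using assms path_jump_nonneg by simp
  then show "0 < jump_factor \<beta> f s" "exp (- \<beta> * path_jump f s) \<le> jump_factor \<beta> f s"
    unfolding jump_factor_def by (auto simp: mult_le_cancel_right1)
  have "(1 + \<beta> * path_jump f s) * exp (- \<beta> * path_jump f s)
      \<le> exp (\<beta> * path_jump f s) * exp (- \<beta> * path_jump f s)"
    by (intro mult_right_mono exp_ge_add_one_self) auto
  then show "jump_factor \<beta> f s \<le> 1"
    unfolding jump_factor_def by (simp add: exp_minus)
qed

lemma jump_product_le_prod:
  assumes "0 \<le> \<beta>" "finite F" "F \<subseteq> I"
  shows "jump_product \<beta> f I \<le> (\<Prod>s\<in>F. jump_factor \<beta> f s)"
  unfolding jump_product_def using assms jump_factor_bounds(1)[OF assms(1)]
  by (intro cINF_lower bdd_belowI2[where m = 0] prod_nonneg) (auto intro: less_imp_le)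

lemma jump_product_nonneg: "0 \<le> \<beta> \<Longrightarrow> 0 \<le> jump_product \<beta> f I"
  unfolding jump_product_def using jump_factor_bounds(1)
  by (intro cINF_greatest prod_nonneg) (auto intro: less_imp_le)

lemma exp_increment_le_jump_product:
  assumes "0 \<le> \<beta>" "I \<subseteq> {a<..b}" "0 \<le> a" "a \<le> b"
  shows "exp (- \<beta> * (f b - f a)) \<le> jump_product \<beta> f I"
  unfolding jump_product_def
proof (rule cINF_greatest)
  fix F assume F: "F \<in> {F. finite F \<and> F \<subseteq> I}"
  have "exp (- \<beta> * (f b - f a)) \<le> exp (- \<beta> * (\<Sum>s\<in>F. path_jump f s))"
    using sum_path_jump_le[of F a b] F assms by (auto intro: mult_left_mono)
  also have "\<dots> = (\<Prod>s\<in>F. exp (- \<beta> * path_jump f s))"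
    using F by (simp add: exp_sum sum_distrib_left)
  also have "\<dots> \<le> (\<Prod>s\<in>F. jump_factor \<beta> f s)"
    using jump_factor_bounds(3)[OF assms(1)] by (intro prod_mono) auto
  finally show "exp (- \<beta> * (f b - f a)) \<le> (\<Prod>s\<in>F. jump_factor \<beta> f s)" .
qed auto

lemma jump_product_Un:
  assumes \<beta>: "0 \<le> \<beta>" and disj: "I \<inter> J = {}"
  shows "jump_product \<beta> f (I \<union> J) = jump_product \<beta> f I * jump_product \<beta> f J"
proof (rule antisym)
  let ?\<Pi> = "\<lambda>F. \<Prod>s\<in>F. jump_factor \<beta> f s"
  have \<Pi>_nonneg: "0 \<le> ?\<Pi> F" for F
    using jump_factor_bounds(1)[OF \<beta>] by (intro prod_nonneg) (auto intro: less_imp_le)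
  have "jump_product \<beta> f (I \<union> J) \<le> ?\<Pi> F1 * ?\<Pi> F2"
    if "finite F1" "F1 \<subseteq> I" "finite F2" "F2 \<subseteq> J" for F1 F2
  proof -
    have "jump_product \<beta> f (I \<union> J) \<le> ?\<Pi> (F1 \<union> F2)"
      using that by (intro jump_product_le_prod[OF \<beta>]) auto
    also have "\<dots> = ?\<Pi> F1 * ?\<Pi> F2"
      using that disj by (intro prod.union_disjoint) auto
    finally show ?thesis .
  qed
  then have "jump_product \<beta> f (I \<union> J) \<le> jump_product \<beta> f I * ?\<Pi> F2"
    if "finite F2" "F2 \<subseteq> J" for F2
    using that \<Pi>_nonneg unfolding jump_product_def[of _ _ I]
    by (intro le_cINF_mult_right) auto
  then have "jump_product \<beta> f (I \<union> J) \<le> jump_product \<beta> f J * jump_product \<beta> f I"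
    using jump_product_nonneg[OF \<beta>] unfolding jump_product_def[of _ _ J]
    by (intro le_cINF_mult_right) (auto simp: mult.commute)
  then show "jump_product \<beta> f (I \<union> J) \<le> jump_product \<beta> f I * jump_product \<beta> f J"
    by (simp add: mult.commute)
  show "jump_product \<beta> f I * jump_product \<beta> f J \<le> jump_product \<beta> f (I \<union> J)"
    unfolding jump_product_def[of _ _ "I \<union> J"]
  proof (rule cINF_greatest)
    fix F assume F: "F \<in> {F. finite F \<and> F \<subseteq> I \<union> J}"
    have "?\<Pi> F = ?\<Pi> (F \<inter> I) * ?\<Pi> (F \<inter> J)"
      using F disj by (subst prod.union_disjoint[symmetric]) (auto intro: prod.cong)
    moreover have "jump_product \<beta> f I * jump_product \<beta> f J \<le> ?\<Pi> (F \<inter> I) * ?\<Pi> (F \<inter> J)"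
      using F \<Pi>_nonneg jump_product_nonneg[OF \<beta>]
      by (intro mult_mono jump_product_le_prod[OF \<beta>]) auto
    ultimately show "jump_product \<beta> f I * jump_product \<beta> f J \<le> ?\<Pi> F" by simp
  qed auto
qed

lemma doleans_exp_split:
  assumes "0 \<le> \<beta>" "0 \<le> a" "a \<le> b"
  shows "doleans_exp \<beta> f b = doleans_exp \<beta> f a * doleans_exp_ratio \<beta> f a b"
proof -
  have "{0<..b} = {0<..a} \<union> {a<..b}" "{0<..a} \<inter> {a<..b} = {}" using assms by auto
  then have "jump_product \<beta> f {0<..b} = jump_product \<beta> f {0<..a} * jump_product \<beta> f {a<..b}"
    using jump_product_Un[OF assms(1)] by simp
  moreover have "exp (\<beta> * f b) = exp (\<beta> * f a) * exp (\<beta> * (f b - f a))"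
    by (simp add: exp_add[symmetric] algebra_simps)
  ultimately show ?thesis
    unfolding doleans_exp_def doleans_exp_ratio_def by (simp add: algebra_simps)
qed

lemma doleans_exp_ratio_ge_1:
  assumes "0 \<le> \<beta>" "0 \<le> a" "a \<le> b"
  shows "1 \<le> doleans_exp_ratio \<beta> f a b"
proof -
  have "1 = exp (\<beta> * (f b - f a)) * exp (- \<beta> * (f b - f a))"
    by (simp add: exp_add[symmetric])
  also have "\<dots> \<le> doleans_exp_ratio \<beta> f a b"
    unfolding doleans_exp_ratio_def using assms
    by (intro mult_left_mono exp_increment_le_jump_product) auto
  finally show ?thesis .
qed

lemma doleans_exp_pos: "0 \<le> \<beta> \<Longrightarrow> 0 \<le> t \<Longrightarrow> 0 < doleans_exp \<beta> f t"
  unfolding doleans_exp_def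
  using exp_increment_le_jump_product[of \<beta> "{0<..t}" 0 t]
  by (intro mult_pos_pos) (auto intro: less_le_trans[OF exp_gt_zero])

lemma doleans_exp_0: "f 0 = 0 \<Longrightarrow> doleans_exp \<beta> f 0 = 1"
  unfolding doleans_exp_def by (simp add: jump_product_empty)

lemma doleans_exp_mono:
  assumes "0 \<le> \<beta>" "0 \<le> a" "a \<le> b"
  shows "doleans_exp \<beta> f a \<le> doleans_exp \<beta> f b"
  using doleans_exp_split[OF assms] doleans_exp_ratio_ge_1[OF assms]
    doleans_exp_pos[OF assms(1,2)] by (simp add: mult_le_cancel_left1)

lemma doleans_exp_ratio_le_jump:
  assumes "0 \<le> \<beta>" "0 \<le> t" "t < s" "s \<le> u"
  shows "doleans_exp_ratio \<beta> f t u
    \<le> exp (\<beta> * (f u - f t - path_jump f s)) * (1 + \<beta> * path_jump f s)"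
proof -
  have "jump_product \<beta> f {t<..u} \<le> (\<Prod>s\<in>{s}. jump_factor \<beta> f s)"
    using assms by (intro jump_product_le_prod) auto
  then have "doleans_exp_ratio \<beta> f t u \<le> exp (\<beta> * (f u - f t)) * jump_factor \<beta> f s"
    unfolding doleans_exp_ratio_def by (intro mult_left_mono) auto
  also have "\<dots> = exp (\<beta> * (f u - f t - path_jump f s)) * (1 + \<beta> * path_jump f s)"
  proof -
    have "exp (\<beta> * (f u - f t - path_jump f s)) = exp (\<beta> * (f u - f t)) * exp (- \<beta> * path_jump f s)"
      by (simp add: exp_add[symmetric] algebra_simps)
    then show ?thesis unfolding jump_factor_def by (simp add: algebra_simps)
  qed
  finally show ?thesis .
qed

lemma doleans_exp_ratio_diff_ge:
  assumes b1: "0 \<le> b1" and b12: "b1 \<le> b2" and ab: "0 \<le> a" "a \<le> b"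
  shows "(b2 - b1) * (f b - f a) \<le> doleans_exp_ratio b2 f a b - doleans_exp_ratio b1 f a b"
proof -
  define D where "D = f b - f a"
  have "doleans_exp_ratio b1 f a b + (b2 - b1) * D \<le> exp (b2 * D) * (\<Prod>s\<in>F. jump_factor b2 f s)"
    if F: "finite F" "F \<subseteq> {a<..b}" for F
  proof -
    \<comment> \<open>split the increment over (a,b] into the jumps at F and the rest c\<close>
    define c where "c = D - (\<Sum>s\<in>F. path_jump f s)"
    have c: "0 \<le> c" using sum_path_jump_le[OF F ab] unfolding c_def D_def by simp
    have factor: "exp (\<beta> * D) * (\<Prod>s\<in>F. jump_factor \<beta> f s)
        = exp (\<beta> * c) * (\<Prod>s\<in>F. 1 + \<beta> * path_jump f s)" for \<beta>
    proof -
      have "(\<Prod>s\<in>F. exp (- \<beta> * path_jump f s)) = exp (- \<beta> * (\<Sum>s\<in>F. path_jump f s))"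
        using F by (simp add: exp_sum sum_distrib_left)
      then show ?thesis
        unfolding c_def jump_factor_def prod.distrib
        by (simp add: algebra_simps exp_diff exp_minus field_simps)
    qed
    have "doleans_exp_ratio b1 f a b \<le> exp (b1 * D) * (\<Prod>s\<in>F. jump_factor b1 f s)"
      unfolding doleans_exp_ratio_def D_def using F
      by (intro mult_left_mono jump_product_le_prod[OF b1]) auto
    then show ?thesis
      using exp_prod_increment_ge[of F "path_jump f" c b1 b2] F c b1 b12 path_jump_nonneg
      unfolding factor c_def by simp
  qed
  then have "doleans_exp_ratio b1 f a b + (b2 - b1) * D \<le> jump_product b2 f {a<..b} * exp (b2 * D)"
    unfolding jump_product_def by (intro le_cINF_mult_right) (auto simp: mult.commute)
  then show ?thesis unfolding doleans_exp_ratio_def D_def by (simp add: mult.commute)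
qed

lemma sum_doleans_exp_weights_le:
  fixes t :: "nat \<Rightarrow> real"
  assumes f0: "f 0 = 0" and b1: "0 \<le> b1" and b12: "b1 < b2" and t: "t 0 = 0" "incseq t"
  shows "(\<Sum>i<N. doleans_exp b1 f (t i) / doleans_exp b2 f (t (Suc i)) * (f (t (Suc i)) - f (t i)))
    \<le> 1 / (b2 - b1)"
proof -
  have b2: "0 \<le> b2" using b1 b12 by simp
  define \<Psi> where "\<Psi> i = doleans_exp b1 f (t i) / doleans_exp b2 f (t i)" for i
  have t_nonneg: "0 \<le> t i" for i using t incseq_SucD[of t] by (metis incseq_def zero_le)
  have t_le: "t i \<le> t (Suc i)" for i using t(2) by (simp add: incseq_SucD)
  have E1: "0 < doleans_exp b1 f (t i)" and E2: "0 < doleans_exp b2 f (t i)" for i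
    using doleans_exp_pos b1 b2 t_nonneg by auto
  have cell: "(b2 - b1) * (doleans_exp b1 f (t i) / doleans_exp b2 f (t (Suc i)) * (f (t (Suc i)) - f (t i)))
      \<le> \<Psi> i - \<Psi> (Suc i)" for i
  proof -
    define R1 where "R1 = doleans_exp_ratio b1 f (t i) (t (Suc i))"
    define R2 where "R2 = doleans_exp_ratio b2 f (t i) (t (Suc i))"
    have "(b2 - b1) * (f (t (Suc i)) - f (t i)) \<le> R2 - R1"
      unfolding R1_def R2_def using doleans_exp_ratio_diff_ge b1 b12 t_nonneg t_le by auto
    moreover have "\<Psi> i - \<Psi> (Suc i) = doleans_exp b1 f (t i) / doleans_exp b2 f (t (Suc i)) * (R2 - R1)"
      using doleans_exp_split[OF b1 t_nonneg[of i] t_le[of i]] doleans_exp_split[OF b2 t_nonneg[of i] t_le[of i]]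
        doleans_exp_ratio_ge_1[OF b2 t_nonneg[of i] t_le[of i]] E1[of i] E2[of i]
      unfolding \<Psi>_def R1_def R2_def by (simp add: field_simps)
    moreover have "0 \<le> doleans_exp b1 f (t i) / doleans_exp b2 f (t (Suc i))"
      using E1[of i] E2[of "Suc i"] by simp
    ultimately show ?thesis
      by (metis mult.left_commute mult_left_mono)
  qed
  have "(b2 - b1) * (\<Sum>i<N. doleans_exp b1 f (t i) / doleans_exp b2 f (t (Suc i)) * (f (t (Suc i)) - f (t i)))
      \<le> (\<Sum>i<N. \<Psi> i - \<Psi> (Suc i))"
    unfolding sum_distrib_left by (intro sum_mono cell)
  also have "\<dots> = \<Psi> 0 - \<Psi> N" by (rule sum_lessThan_telescope')
  also have "\<dots> \<le> 1"
    using doleans_exp_0[OF f0] E1[of N] E2[of N] unfolding \<Psi>_def t by simp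
  finally show ?thesis using b12 by (simp add: field_simps mult.commute)
qed

lemma doleans_exp_cell_bound:
  assumes b1: "0 \<le> b1" and b12: "b1 \<le> b2"
    and t: "0 \<le> t0" "t0 < s" "s \<le> t1" and jump: "path_jump f s \<le> \<Phi>"
  shows "doleans_exp b1 f s * doleans_exp b2 f t1
    \<le> (1 + b2 * \<Phi>) * (1 + b1 * \<Phi>)
      * exp (b1 * (f s - f t0 - path_jump f s) + b2 * (f t1 - f t0 - path_jump f s))
      * (doleans_exp b1 f t0 * doleans_exp b2 f t0)"
proof -
  have b2: "0 \<le> b2" using b1 b12 by simp
  define \<Delta> where "\<Delta> = path_jump f s"
  have \<Delta>: "0 \<le> \<Delta>" "\<Delta> \<le> \<Phi>" unfolding \<Delta>_def using path_jump_nonneg jump by auto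
  define R1 where "R1 = doleans_exp_ratio b1 f t0 s"
  define R2 where "R2 = doleans_exp_ratio b2 f t0 t1"
  have R1: "R1 \<le> exp (b1 * (f s - f t0 - \<Delta>)) * (1 + b1 * \<Delta>)" "1 \<le> R1"
    unfolding R1_def \<Delta>_def using t
    by (auto intro!: doleans_exp_ratio_le_jump[OF b1] doleans_exp_ratio_ge_1[OF b1])
  have R2: "R2 \<le> exp (b2 * (f t1 - f t0 - \<Delta>)) * (1 + b2 * \<Delta>)" "1 \<le> R2"
    unfolding R2_def \<Delta>_def using t
    by (auto intro!: doleans_exp_ratio_le_jump[OF b2] doleans_exp_ratio_ge_1[OF b2])
  have "R1 * R2 \<le> (exp (b1 * (f s - f t0 - \<Delta>)) * (1 + b1 * \<Delta>)) * (exp (b2 * (f t1 - f t0 - \<Delta>)) * (1 + b2 * \<Delta>))"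
    using R1 R2 by (intro mult_mono) auto
  also have "\<dots> = (1 + b2 * \<Delta>) * (1 + b1 * \<Delta>) * exp (b1 * (f s - f t0 - \<Delta>) + b2 * (f t1 - f t0 - \<Delta>))"
    by (simp only: exp_add mult_ac)
  also have "\<dots> \<le> (1 + b2 * \<Phi>) * (1 + b1 * \<Phi>) * exp (b1 * (f s - f t0 - \<Delta>) + b2 * (f t1 - f t0 - \<Delta>))"
    using \<Delta> b1 b2 by (intro mult_right_mono mult_mono add_left_mono mult_left_mono) auto
  finally have "R1 * R2 \<le> (1 + b2 * \<Phi>) * (1 + b1 * \<Phi>)
      * exp (b1 * (f s - f t0 - \<Delta>) + b2 * (f t1 - f t0 - \<Delta>))" .
  moreover have "0 < doleans_exp b1 f t0 * doleans_exp b2 f t0"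
    using doleans_exp_pos b1 b2 t by simp
  moreover have "doleans_exp b1 f s * doleans_exp b2 f t1 = (doleans_exp b1 f t0 * doleans_exp b2 f t0) * (R1 * R2)"
    unfolding R1_def R2_def using t
    by (simp add: doleans_exp_split[OF b1, of t0 s] doleans_exp_split[OF b2, of t0 t1] mult_ac)
  ultimately show ?thesis
    unfolding \<Delta>_def by (metis mult.commute mult_left_mono less_imp_le)
qed

end

section \<open>Dyadic approximation\<close>

definition dyadic_index :: "nat \<Rightarrow> real \<Rightarrow> nat" where
  "dyadic_index n s = nat (\<lceil>s * 2 ^ n\<rceil> - 1)"

lemma dyadic_index_unique:
  assumes "0 < s"
  shows "real i / 2 ^ n < s \<and> s \<le> real (Suc i) / 2 ^ n \<longleftrightarrow> i = dyadic_index n s"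
proof -
  have "real i / 2 ^ n < s \<and> s \<le> real (Suc i) / 2 ^ n \<longleftrightarrow> real i < s * 2 ^ n \<and> s * 2 ^ n \<le> real i + 1"
    by (simp add: divide_less_eq le_divide_eq add.commute)
  also have "\<dots> \<longleftrightarrow> \<lceil>s * 2 ^ n\<rceil> = int i + 1"
    by (simp add: ceiling_eq_iff add.commute)
  also have "\<dots> \<longleftrightarrow> i = dyadic_index n s"
    using assms unfolding dyadic_index_def by (auto simp: one_le_ceiling)
  finally show ?thesis .
qed

lemma dyadic_index_bounds:
  assumes "0 < s"
  shows "real (dyadic_index n s) / 2 ^ n < s" "s \<le> real (Suc (dyadic_index n s)) / 2 ^ n"
  using dyadic_index_unique[OF assms] by blast+

lemma dyadic_index_less:
  assumes "0 < s" "s \<le> real N"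
  shows "dyadic_index n s < N * 2 ^ n"
proof -
  have "real (dyadic_index n s) < s * 2 ^ n"
    using dyadic_index_bounds(1)[OF assms(1), of n] by (simp add: divide_less_eq)
  also have "\<dots> \<le> real N * 2 ^ n"
    using assms(2) by simp
  finally have "real (dyadic_index n s) < real N * 2 ^ n" .
  then show ?thesis by (metis of_nat_less_iff of_nat_mult of_nat_numeral of_nat_power)
qed

lemma dyadic_div2_bounds:
  "real (j div 2) / 2 ^ n \<le> real j / 2 ^ Suc n"
  "real (Suc j) / 2 ^ Suc n \<le> real (Suc (j div 2)) / 2 ^ n"
proof -
  have halve: "x / 2 ^ Suc n \<le> y / 2 ^ n \<longleftrightarrow> x \<le> 2 * y" "y / 2 ^ n \<le> x / 2 ^ Suc n \<longleftrightarrow> 2 * y \<le> x"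
    for x y :: real
    by (simp_all add: field_simps)
  have "real (2 * (j div 2)) \<le> real j" "real (Suc j) \<le> real (2 * Suc (j div 2))"
    by (simp_all only: of_nat_le_iff) presburger+
  then show "real (j div 2) / 2 ^ n \<le> real j / 2 ^ Suc n"
    "real (Suc j) / 2 ^ Suc n \<le> real (Suc (j div 2)) / 2 ^ n"
    unfolding halve by simp_all
qed

lemma dyadic_index_Suc:
  assumes "0 < s"
  shows "dyadic_index n s = dyadic_index (Suc n) s div 2"
  using dyadic_index_bounds[OF assms, of "Suc n"] dyadic_div2_bounds[of "dyadic_index (Suc n) s" n]
  by (intro dyadic_index_unique[OF assms, THEN iffD1, symmetric]) auto

lemma dyadic_cell_Suc_subset:
  assumes "0 < s"
  shows "real (dyadic_index n s) / 2 ^ n \<le> real (dyadic_index (Suc n) s) / 2 ^ Suc n"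
    "real (Suc (dyadic_index (Suc n) s)) / 2 ^ Suc n \<le> real (Suc (dyadic_index n s)) / 2 ^ n"
  unfolding dyadic_index_Suc[OF assms, of n] by (rule dyadic_div2_bounds)+

lemma exists_fine_dyadic_cell:
  fixes f :: "real \<Rightarrow> real"
  assumes mono: "mono_on {0..} f" and rc: "continuous (at_right s) f" and s: "0 < s" and \<eta>: "0 < \<eta>"
  obtains n where "s \<le> real n"
    "f s - path_jump f s - \<eta> < f (real (dyadic_index n s) / 2 ^ n)"
    "f (real (Suc (dyadic_index n s)) / 2 ^ n) - f s < \<eta>"
proof -
  have "f s - path_jump f s - \<eta> < (SUP u\<in>{0..<s}. f u)"
    unfolding path_jump_def using s \<eta> by simp
  then obtain u0 where u0: "0 \<le> u0" "u0 < s" "f s - path_jump f s - \<eta> < f u0"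
    using less_cSUP_iff[OF _ bdd_above_left_values[OF mono s]] s by auto
  obtain \<delta> where \<delta>: "0 < \<delta>" "\<forall>v\<in>{s<..}. \<bar>v - s\<bar> < \<delta> \<longrightarrow> \<bar>f v - f s\<bar> < \<eta>"
    using rc \<eta> unfolding continuous_within_eps_delta dist_real_def by blast
  obtain N where N: "(1/2::real) ^ N < min \<delta> (s - u0)"
    using real_arch_pow_inv[of "min \<delta> (s - u0)" "1/2"] \<delta> u0 by auto
  define n where "n = max N (nat \<lceil>s\<rceil>)"
  have "(1/2::real) ^ n \<le> (1/2) ^ N" unfolding n_def by (intro power_decreasing) auto
  with N have small: "(1/2::real) ^ n < \<delta>" "(1/2::real) ^ n < s - u0" by linarith+
  define t0 where "t0 = real (dyadic_index n s) / 2 ^ n"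
  define t1 where "t1 = real (Suc (dyadic_index n s)) / 2 ^ n"
  have t: "t0 < s" "s \<le> t1" "t1 = t0 + (1/2) ^ n"
    unfolding t0_def t1_def using dyadic_index_bounds[OF s]
    by (auto simp: field_simps power_one_over)
  show ?thesis
  proof
    show "s \<le> real n" unfolding n_def by linarith
    have "f u0 \<le> f t0"
      using u0 small t by (intro mono_onD[OF mono]) (auto simp: t0_def)
    with u0 show "f s - path_jump f s - \<eta> < f (real (dyadic_index n s) / 2 ^ n)"
      unfolding t0_def by simp
    show "f (real (Suc (dyadic_index n s)) / 2 ^ n) - f s < \<eta>"
      using \<delta>(2) \<eta> small t unfolding t1_def[symmetric]
      by (cases "s = t1") (auto dest!: bspec[of _ _ t1])
  qed
qed

definition dyadic_weight :: "real \<Rightarrow> real \<Rightarrow> (real \<Rightarrow> real) \<Rightarrow> nat \<Rightarrow> nat \<Rightarrow> real" where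
  "dyadic_weight b1 b2 f n i = doleans_exp b1 f (real i / 2 ^ n) / doleans_exp b2 f (real (Suc i) / 2 ^ n)"

lemma doleans_exp_le_dyadic_weight:
  fixes f :: "real \<Rightarrow> real"
  assumes mono: "mono_on {0..} f" and rc: "continuous (at_right s) f"
    and jump: "path_jump f s \<le> \<Phi>" and \<Phi>: "0 \<le> \<Phi>" and b1: "0 \<le> b1" and b12: "b1 \<le> b2"
    and s: "0 < s" and \<epsilon>: "0 < \<epsilon>"
  obtains n where "s \<le> real n"
    "doleans_exp b1 f s \<le> (1 + b2 * \<Phi>) * (1 + b1 * \<Phi>) * exp \<epsilon>
       * dyadic_weight b1 b2 f n (dyadic_index n s) * doleans_exp b2 f (real (dyadic_index n s) / 2 ^ n)"
proof -
  have b2: "0 \<le> b2" using b1 b12 by simp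
  define \<eta> where "\<eta> = \<epsilon> / (3 * b2 + 1)"
  have \<eta>: "0 < \<eta>" "3 * b2 * \<eta> \<le> \<epsilon>"
    unfolding \<eta>_def using \<epsilon> b2 by (auto simp: field_simps)
  obtain n where n: "s \<le> real n"
    "f s - path_jump f s - \<eta> < f (real (dyadic_index n s) / 2 ^ n)"
    "f (real (Suc (dyadic_index n s)) / 2 ^ n) - f s < \<eta>"
    using exists_fine_dyadic_cell[OF mono rc s \<eta>(1)] by blast
  define t0 where "t0 = real (dyadic_index n s) / 2 ^ n"
  define t1 where "t1 = real (Suc (dyadic_index n s)) / 2 ^ n"
  have t: "0 \<le> t0" "t0 < s" "s \<le> t1"
    unfolding t0_def t1_def using dyadic_index_bounds[OF s] by auto
  define K where "K = (1 + b2 * \<Phi>) * (1 + b1 * \<Phi>)"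
  have d1: "f s - f t0 - path_jump f s \<le> \<eta>" and d2: "f t1 - f t0 - path_jump f s \<le> 2 * \<eta>"
    using n unfolding t0_def t1_def by linarith+
  have "b1 * (f s - f t0 - path_jump f s) \<le> b2 * \<eta>"
    using mult_left_mono[OF d1 b1] mult_right_mono[OF b12, of \<eta>] \<eta>(1) by linarith
  moreover have "b2 * (f t1 - f t0 - path_jump f s) \<le> b2 * (2 * \<eta>)"
    using mult_left_mono[OF d2 b2] .
  ultimately have "exp (b1 * (f s - f t0 - path_jump f s) + b2 * (f t1 - f t0 - path_jump f s)) \<le> exp \<epsilon>"
    using \<eta>(2) by simp
  moreover have "0 \<le> K" "0 \<le> doleans_exp b1 f t0 * doleans_exp b2 f t0"
    unfolding K_def using doleans_exp_pos[OF mono] b1 b2 t \<Phi> by (auto intro: less_imp_le)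
  ultimately have "doleans_exp b1 f s * doleans_exp b2 f t1 \<le> K * exp \<epsilon> * (doleans_exp b1 f t0 * doleans_exp b2 f t0)"
    using doleans_exp_cell_bound[OF mono b1 b12 t jump] unfolding K_def[symmetric]
    by (meson mult_left_mono mult_right_mono order.trans)
  moreover have "0 < doleans_exp b2 f t1"
    using doleans_exp_pos[OF mono b2] t by simp
  ultimately have "doleans_exp b1 f s \<le> K * exp \<epsilon> * (doleans_exp b1 f t0 / doleans_exp b2 f t1) * doleans_exp b2 f t0"
    by (simp add: field_simps)
  with n show ?thesis
    using that unfolding K_def dyadic_weight_def t0_def t1_def by blast
qed

definition dyadic_integrand ::
    "real \<Rightarrow> real \<Rightarrow> (real \<Rightarrow> real) \<Rightarrow> (real \<Rightarrow> ennreal) \<Rightarrow> nat \<Rightarrow> real \<Rightarrow> ennreal" where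
  "dyadic_integrand b1 b2 f w n s = (\<Sum>i<n * 2 ^ n. ennreal (dyadic_weight b1 b2 f n i)
     * (w s * indicator {real i / 2 ^ n<..real (Suc i) / 2 ^ n} s))"

lemma dyadic_integrand_eq:
  assumes "0 < s" "s \<le> real n"
  shows "dyadic_integrand b1 b2 f w n s = ennreal (dyadic_weight b1 b2 f n (dyadic_index n s)) * w s"
proof -
  have "dyadic_integrand b1 b2 f w n s
      = (\<Sum>i<n * 2 ^ n. if i = dyadic_index n s then ennreal (dyadic_weight b1 b2 f n i) * w s else 0)"
    unfolding dyadic_integrand_def
    by (intro sum.cong refl) (auto simp: dyadic_index_unique[OF assms(1), symmetric] split: split_indicator)
  then show ?thesis using dyadic_index_less[OF assms] by simp
qed

lemma dyadic_integrand_outside: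
  assumes "s \<le> 0 \<or> real n < s"
  shows "dyadic_integrand b1 b2 f w n s = 0"
  unfolding dyadic_integrand_def
proof (intro sum.neutral ballI)
  fix i assume "i \<in> {..<n * 2 ^ n}"
  then have "real (Suc i) \<le> real n * 2 ^ n"
    by (metis lessThan_iff Suc_leI of_nat_le_iff of_nat_mult of_nat_numeral of_nat_power)
  then have "real (Suc i) / 2 ^ n \<le> real n" by (simp add: divide_le_eq)
  with assms have "s \<notin> {real i / 2 ^ n<..real (Suc i) / 2 ^ n}"
    by (auto simp: not_less) (smt (verit) divide_nonneg_pos of_nat_0_le_iff zero_less_power)
  then show "ennreal (dyadic_weight b1 b2 f n i) * (w s * indicator {real i / 2 ^ n<..real (Suc i) / 2 ^ n} s) = 0"
    by simp
qed

lemma incseq_dyadic_integrand: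
  fixes f :: "real \<Rightarrow> real"
  assumes mono: "mono_on {0..} f" and b1: "0 \<le> b1" and b12: "b1 \<le> b2"
  shows "incseq (\<lambda>n. dyadic_integrand b1 b2 f w n s)"
proof (rule incseq_SucI)
  fix n
  show "dyadic_integrand b1 b2 f w n s \<le> dyadic_integrand b1 b2 f w (Suc n) s"
  proof (cases "0 < s \<and> s \<le> real n")
    case False
    then show ?thesis by (subst dyadic_integrand_outside) auto
  next
    case True
    then have s: "0 < s" by simp
    have b2: "0 \<le> b2" using b1 b12 by simp
    let ?i = "dyadic_index n s" and ?j = "dyadic_index (Suc n) s"
    have "doleans_exp b1 f (real ?i / 2 ^ n) \<le> doleans_exp b1 f (real ?j / 2 ^ Suc n)"
      by (rule doleans_exp_mono[OF mono b1 _ dyadic_cell_Suc_subset(1)[OF s]]) simp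
    moreover have "doleans_exp b2 f (real (Suc ?j) / 2 ^ Suc n) \<le> doleans_exp b2 f (real (Suc ?i) / 2 ^ n)"
      by (rule doleans_exp_mono[OF mono b2 _ dyadic_cell_Suc_subset(2)[OF s]]) simp
    ultimately have "dyadic_weight b1 b2 f n ?i \<le> dyadic_weight b1 b2 f (Suc n) ?j"
      unfolding dyadic_weight_def using doleans_exp_pos[OF mono] b1 b2
      by (intro frac_le) (auto intro: less_imp_le)
    then show ?thesis
      using True by (simp add: dyadic_integrand_eq mult_right_mono ennreal_leI)
  qed
qed

lemma doleans_exp_sq_le_SUP_dyadic_integrand:
  fixes f :: "real \<Rightarrow> real" and p :: "real \<Rightarrow> ennreal"
  assumes mono: "mono_on {0..} f" and rc: "continuous (at_right s) f"
    and jump: "path_jump f s \<le> \<Phi>" and \<Phi>: "0 \<le> \<Phi>" and b1: "0 \<le> b1" and b12: "b1 \<le> b2"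
    and s: "0 < s"
  shows "ennreal (doleans_exp b1 f s) * w s * (INF t\<in>{0..<s}. SUP u\<in>{t..}. p u)\<^sup>2
    \<le> ennreal ((1 + b2 * \<Phi>) * (1 + b1 * \<Phi>))
      * ((SUP u\<in>{0..}. ennreal (doleans_exp b2 f u) * (p u)\<^sup>2) * (SUP n. dyadic_integrand b1 b2 f w n s))"
proof (rule ennreal_le_of_le_exp_mult)
  have b2: "0 \<le> b2" using b1 b12 by simp
  define X where "X = (INF t\<in>{0..<s}. SUP u\<in>{t..}. p u)"
  define K where "K = (1 + b2 * \<Phi>) * (1 + b1 * \<Phi>)"
  show "0 \<le> K" unfolding K_def using b1 b2 \<Phi> by simp
  fix \<epsilon> :: real assume \<epsilon>: "0 < \<epsilon>"
  obtain n where n: "s \<le> real n" and E1: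
    "doleans_exp b1 f s \<le> K * exp \<epsilon> * dyadic_weight b1 b2 f n (dyadic_index n s)
       * doleans_exp b2 f (real (dyadic_index n s) / 2 ^ n)"
    using doleans_exp_le_dyadic_weight[OF mono rc jump \<Phi> b1 b12 s \<epsilon>] unfolding K_def by blast
  define t0 where "t0 = real (dyadic_index n s) / 2 ^ n"
  define k where "k = dyadic_weight b1 b2 f n (dyadic_index n s)"
  have t0: "0 \<le> t0" "t0 < s" unfolding t0_def using dyadic_index_bounds(1)[OF s] by auto
  have k: "0 \<le> k"
    unfolding k_def dyadic_weight_def using doleans_exp_pos[OF mono] b1 b2 by (simp add: less_imp_le)
  have "ennreal (doleans_exp b2 f t0) * X\<^sup>2 \<le> ennreal (doleans_exp b2 f t0) * (SUP u\<in>{t0..}. p u)\<^sup>2"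
    unfolding X_def using t0 by (intro mult_left_mono power_mono INF_lower) auto
  also have "\<dots> = (SUP u\<in>{t0..}. ennreal (doleans_exp b2 f t0) * (p u)\<^sup>2)"
    by (simp add: power2_SUP_ennreal SUP_mult_left_ennreal)
  also have "\<dots> \<le> (SUP u\<in>{0..}. ennreal (doleans_exp b2 f u) * (p u)\<^sup>2)"
  proof (rule SUP_mono)
    fix u assume "u \<in> {t0..}"
    then show "\<exists>v\<in>{0..}. ennreal (doleans_exp b2 f t0) * (p u)\<^sup>2 \<le> ennreal (doleans_exp b2 f v) * (p v)\<^sup>2"
      using t0 by (intro bexI[of _ u] mult_right_mono ennreal_leI doleans_exp_mono[OF mono b2]) auto
  qed
  finally have S: "ennreal (doleans_exp b2 f t0) * X\<^sup>2 \<le> (SUP u\<in>{0..}. ennreal (doleans_exp b2 f u) * (p u)\<^sup>2)" .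
  have Z: "ennreal k * w s \<le> (SUP n. dyadic_integrand b1 b2 f w n s)"
    unfolding k_def dyadic_integrand_eq[OF s n, of b1 b2 f w, symmetric] by (rule SUP_upper) simp
  have "ennreal (doleans_exp b1 f s) * w s * X\<^sup>2 \<le> ennreal (K * exp \<epsilon> * k * doleans_exp b2 f t0) * w s * X\<^sup>2"
    using E1 unfolding k_def t0_def by (intro mult_right_mono ennreal_leI) auto
  also have "\<dots> = ennreal (K * exp \<epsilon>) * (ennreal k * w s) * (ennreal (doleans_exp b2 f t0) * X\<^sup>2)"
    using \<open>0 \<le> K\<close> k doleans_exp_pos[OF mono b2 t0(1)] by (simp add: ennreal_mult mult_ac)
  also have "\<dots> \<le> ennreal (K * exp \<epsilon>) * ((SUP u\<in>{0..}. ennreal (doleans_exp b2 f u) * (p u)\<^sup>2)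
      * (SUP n. dyadic_integrand b1 b2 f w n s))"
    using mult_left_mono[OF mult_mono[OF Z S], of "ennreal (K * exp \<epsilon>)"] by (simp add: mult_ac)
  finally show "ennreal (doleans_exp b1 f s) * w s * (INF t\<in>{0..<s}. SUP u\<in>{t..}. p u)\<^sup>2
    \<le> ennreal (K * exp \<epsilon>) * ((SUP u\<in>{0..}. ennreal (doleans_exp b2 f u) * (p u)\<^sup>2)
      * (SUP n. dyadic_integrand b1 b2 f w n s))" unfolding X_def .
qed

section \<open>Cumulative integrals against a Borel measure on the line\<close>

definition cum_integral :: "real measure \<Rightarrow> (real \<Rightarrow> ennreal) \<Rightarrow> real \<Rightarrow> ennreal" where
  "cum_integral \<mu> w t = (\<integral>\<^sup>+ s. w s * indicator {0<..t} s \<partial>\<mu>)"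

context
  fixes \<mu> :: "real measure" and w :: "real \<Rightarrow> ennreal"
  assumes sets_\<mu> [measurable_cong]: "sets \<mu> = sets borel"
    and w [measurable]: "w \<in> borel_measurable \<mu>"
begin

lemma cum_integral_split:
  assumes "0 \<le> u" "u \<le> v"
  shows "cum_integral \<mu> w v = cum_integral \<mu> w u + (\<integral>\<^sup>+ s. w s * indicator {u<..v} s \<partial>\<mu>)"
proof -
  have "w s * indicator {0<..v} s = w s * indicator {0<..u} s + w s * indicator {u<..v} s" for s
    using assms by (auto simp: indicator_def)
  then show ?thesis
    unfolding cum_integral_def by (simp add: nn_integral_add)
qed

context
  assumes finite: "\<And>t. 0 \<le> t \<Longrightarrow> cum_integral \<mu> w t < \<infinity>"
begin

lemma cum_integral_increment:
  assumes "0 \<le> u" "u \<le> v"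
  shows "ennreal (enn2real (cum_integral \<mu> w v) - enn2real (cum_integral \<mu> w u))
    = (\<integral>\<^sup>+ s. w s * indicator {u<..v} s \<partial>\<mu>)"
proof -
  have split: "cum_integral \<mu> w v = cum_integral \<mu> w u + (\<integral>\<^sup>+ s. w s * indicator {u<..v} s \<partial>\<mu>)"
    by (rule cum_integral_split[OF assms])
  moreover have "cum_integral \<mu> w v < \<infinity>" using finite assms by simp
  ultimately have "cum_integral \<mu> w u < \<infinity>" "(\<integral>\<^sup>+ s. w s * indicator {u<..v} s \<partial>\<mu>) < \<infinity>"
    by (auto simp: top_unique)
  then show ?thesis unfolding split by (simp add: enn2real_plus)
qed

lemma mono_on_cum_integral: "mono_on {0..} (\<lambda>t. enn2real (cum_integral \<mu> w t))"
proof (rule mono_onI)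
  fix u v :: real assume "u \<in> {0..}" "v \<in> {0..}" "u \<le> v"
  then show "enn2real (cum_integral \<mu> w u) \<le> enn2real (cum_integral \<mu> w v)"
    using cum_integral_split[of u v] finite[of v] by (intro enn2real_mono) auto
qed

lemma cum_integral_0: "enn2real (cum_integral \<mu> w 0) = 0"
  unfolding cum_integral_def by simp

lemma continuous_at_right_cum_integral:
  assumes t: "0 \<le> t"
  shows "continuous (at_right t) (\<lambda>t. enn2real (cum_integral \<mu> w t))"
  unfolding continuous_within_eps_delta
proof (intro allI impI)
  fix \<epsilon> :: real assume \<epsilon>: "0 < \<epsilon>"
  let ?F = "\<lambda>t. enn2real (cum_integral \<mu> w t)"
  define g where "g m s = w s * indicator {t<..t + 1 / Suc m} s" for m :: nat and s
  have g_integral: "integral\<^sup>N \<mu> (g m) = ennreal (?F (t + 1 / Suc m) - ?F t)" for m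
    unfolding g_def using cum_integral_increment[of t "t + 1 / Suc m"] t by simp
  have "1 / real (Suc (Suc m)) \<le> 1 / real (Suc m)" for m
    by (simp add: frac_le)
  then have "g (Suc m) s \<le> g m s" for m s
    unfolding g_def by (intro mult_left_mono) (auto split: split_indicator intro: order.trans)
  then have "decseq g" by (intro decseq_SucI le_funI)
  moreover have "g m \<in> borel_measurable \<mu>" for m
    unfolding g_def by measurable
  ultimately have "(INF m. integral\<^sup>N \<mu> (g m)) = (\<integral>\<^sup>+ s. (INF m. g m s) \<partial>\<mu>)"
    by (intro nn_integral_monotone_convergence_INF_decseq[symmetric]) (auto simp: g_integral)
  also have "(\<lambda>s. INF m. g m s) = (\<lambda>s. 0)"
  proof
    fix s
    obtain m :: nat where "t < s \<Longrightarrow> 1 / Suc m < s - t"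
      by (metis diff_gt_0_iff_gt nat_approx_posE)
    then have "g m s = 0" unfolding g_def by (auto split: split_indicator)
    then show "(INF m. g m s) = 0" by (metis INF_lower UNIV_I le_zero_eq)
  qed
  finally have "(INF m. integral\<^sup>N \<mu> (g m)) < ennreal \<epsilon>" using \<epsilon> by simp
  then obtain m where "integral\<^sup>N \<mu> (g m) < ennreal \<epsilon>" by (auto simp: INF_less_iff)
  then have m: "?F (t + 1 / Suc m) - ?F t < \<epsilon>"
    unfolding g_integral using \<epsilon> by (smt (verit) ennreal_less_iff)
  show "\<exists>\<delta>>0. \<forall>v\<in>{t<..}. dist v t < \<delta> \<longrightarrow> dist (?F v) (?F t) < \<epsilon>"
  proof (intro exI[of _ "1 / Suc m"] conjI ballI impI)
    fix v assume "v \<in> {t<..}" "dist v t < 1 / Suc m"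
    then have "?F t \<le> ?F v" "?F v \<le> ?F (t + 1 / Suc m)"
      using t by (auto intro!: mono_onD[OF mono_on_cum_integral] simp: dist_real_def)
    then show "dist (?F v) (?F t) < \<epsilon>" using m by (simp add: dist_real_def)
  qed simp
qed

lemma dyadic_integrand_integral_le:
  assumes b1: "0 \<le> b1" and b12: "b1 < b2"
  shows "(\<integral>\<^sup>+ s. dyadic_integrand b1 b2 (\<lambda>t. enn2real (cum_integral \<mu> w t)) w n s \<partial>\<mu>)
    \<le> ennreal (1 / (b2 - b1))"
proof -
  let ?F = "\<lambda>t. enn2real (cum_integral \<mu> w t)"
  let ?t = "\<lambda>i::nat. real i / 2 ^ n"
  have incr: "0 \<le> ?F (?t (Suc i)) - ?F (?t i)" for i
    using mono_onD[OF mono_on_cum_integral, of "?t i" "?t (Suc i)"] by (simp add: divide_right_mono)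
  have weight: "0 \<le> dyadic_weight b1 b2 ?F n i" for i
    unfolding dyadic_weight_def using doleans_exp_pos[OF mono_on_cum_integral] b1 b12
    by (simp add: less_imp_le)
  have "(\<integral>\<^sup>+ s. dyadic_integrand b1 b2 ?F w n s \<partial>\<mu>)
      = (\<Sum>i<n * 2 ^ n. ennreal (dyadic_weight b1 b2 ?F n i) * (\<integral>\<^sup>+ s. w s * indicator {?t i<..?t (Suc i)} s \<partial>\<mu>))"
    unfolding dyadic_integrand_def by (simp add: nn_integral_sum nn_integral_cmult)
  also have "\<dots> = (\<Sum>i<n * 2 ^ n. ennreal (dyadic_weight b1 b2 ?F n i) * ennreal (?F (?t (Suc i)) - ?F (?t i)))"
    by (intro sum.cong refl, subst cum_integral_increment) (auto simp: divide_right_mono)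
  also have "\<dots> = (\<Sum>i<n * 2 ^ n. ennreal (dyadic_weight b1 b2 ?F n i * (?F (?t (Suc i)) - ?F (?t i))))"
    using incr weight by (simp add: ennreal_mult)
  also have "\<dots> = ennreal (\<Sum>i<n * 2 ^ n. dyadic_weight b1 b2 ?F n i * (?F (?t (Suc i)) - ?F (?t i)))"
    using incr weight by (intro sum_ennreal mult_nonneg_nonneg)
  also have "\<dots> \<le> ennreal (1 / (b2 - b1))"
    unfolding dyadic_weight_def
    by (intro ennreal_leI sum_doleans_exp_weights_le[OF mono_on_cum_integral cum_integral_0 b1 b12])
      (auto intro!: incseq_SucI simp: divide_right_mono)
  finally show ?thesis .
qed

end

end

lemma nn_integral_doleans_exp_sq_le:
  fixes \<mu> :: "real measure" and w p :: "real \<Rightarrow> ennreal"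
  defines "F \<equiv> \<lambda>t. enn2real (cum_integral \<mu> w t)"
  assumes sets_\<mu> [measurable_cong]: "sets \<mu> = sets borel" and w [measurable]: "w \<in> borel_measurable \<mu>"
    and finite: "\<And>t. 0 \<le> t \<Longrightarrow> cum_integral \<mu> w t < \<infinity>"
    and jump: "\<And>t. 0 \<le> t \<Longrightarrow> path_jump F t \<le> \<Phi>" and \<Phi>: "0 \<le> \<Phi>" and b1: "0 \<le> b1" and b12: "b1 < b2"
  shows "(\<integral>\<^sup>+ s. ennreal (doleans_exp b1 F s) * w s * (INF t\<in>{0..<s}. SUP u\<in>{t..}. p u)\<^sup>2
      * indicator {0<..} s \<partial>\<mu>)
    \<le> ennreal ((1 + b2 * \<Phi>) * (1 + b1 * \<Phi>) / (b2 - b1))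
      * (SUP u\<in>{0..}. ennreal (doleans_exp b2 F u) * (p u)\<^sup>2)"
proof -
  define K where "K = (1 + b2 * \<Phi>) * (1 + b1 * \<Phi>)"
  define S where "S = (SUP u\<in>{0..}. ennreal (doleans_exp b2 F u) * (p u)\<^sup>2)"
  have K: "0 \<le> K" unfolding K_def using b1 b12 \<Phi> by simp
  have mono: "mono_on {0..} F"
    unfolding F_def using mono_on_cum_integral[OF sets_\<mu> w finite] .
  have [measurable]: "dyadic_integrand b1 b2 F w n \<in> borel_measurable \<mu>" for n
    unfolding dyadic_integrand_def by measurable
  have "(\<integral>\<^sup>+ s. ennreal (doleans_exp b1 F s) * w s * (INF t\<in>{0..<s}. SUP u\<in>{t..}. p u)\<^sup>2
      * indicator {0<..} s \<partial>\<mu>) \<le> (\<integral>\<^sup>+ s. ennreal K * (S * (SUP n. dyadic_integrand b1 b2 F w n s)) \<partial>\<mu>)"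
    unfolding K_def S_def F_def
    using doleans_exp_sq_le_SUP_dyadic_integrand[OF mono_on_cum_integral[OF sets_\<mu> w finite]
        continuous_at_right_cum_integral[OF sets_\<mu> w finite] jump[unfolded F_def] \<Phi> b1 less_imp_le[OF b12]]
    by (intro nn_integral_mono) (auto split: split_indicator)
  also have "\<dots> = ennreal K * S * (SUP n. \<integral>\<^sup>+ s. dyadic_integrand b1 b2 F w n s \<partial>\<mu>)"
    using incseq_dyadic_integrand[OF mono b1 less_imp_le[OF b12]]
    by (simp add: nn_integral_cmult nn_integral_monotone_convergence_SUP incseq_def le_fun_def mult.assoc)
  also have "\<dots> \<le> ennreal K * S * ennreal (1 / (b2 - b1))"
    unfolding F_def
    by (intro mult_left_mono SUP_least dyadic_integrand_integral_le[OF sets_\<mu> w finite b1 b12]) auto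
  also have "\<dots> = ennreal (K / (b2 - b1)) * S"
    using K b12 by (simp add: ennreal_mult[symmetric] mult_ac)
  finally show ?thesis unfolding K_def S_def .
qed

section \<open>The stochastic setting\<close>

lemma predictable_path_measurable:
  assumes P: "predictable M G X" and filt: "filtration_on M G" and \<omega>: "\<omega> \<in> space M"
  shows "(\<lambda>s. X s \<omega>) \<in> borel_measurable (restrict_space borel {0..})"
proof -
  have sub: "\<And>s B. 0 \<le> s \<Longrightarrow> B \<in> sets (G s) \<Longrightarrow> B \<subseteq> space M"
    using filt unfolding filtration_on_def by (meson sets.sets_into_space subsetD)
  let ?\<Omega> = "{0..} \<times> space M"
  let ?N = "{{0} \<times> B | B. B \<in> sets (G 0)} \<union>
      {{s<..t} \<times> B | s t B. 0 \<le> s \<and> s \<le> t \<and> B \<in> sets (G s)}"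
  have "(\<lambda>s. (s, \<omega>)) \<in> restrict_space borel {0..} \<rightarrow>\<^sub>M predictable_sigma M G"
    unfolding predictable_sigma_def
  proof (rule measurable_measure_of)
    show "?N \<subseteq> Pow ?\<Omega>" using sub by fastforce
    show "(\<lambda>s. (s, \<omega>)) \<in> space (restrict_space borel {0..}) \<rightarrow> ?\<Omega>"
      using \<omega> by (auto simp: space_restrict_space)
    fix y assume "y \<in> ?N"
    then consider (a) B where "y = {0} \<times> B" | (b) s t B where "y = {s<..t} \<times> B"
      by blast
    then show "(\<lambda>s. (s, \<omega>)) -` y \<inter> space (restrict_space borel {0..}) \<in> sets (restrict_space borel {0..})"
    proof cases
      case a
      then have "(\<lambda>s. (s, \<omega>)) -` y \<inter> space (restrict_space borel {0..}) = {0..} \<inter> (if \<omega> \<in> B then {0} else {})"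
        by (auto simp: space_restrict_space)
      then show ?thesis by (simp add: sets_restrict_space_iff)
    next
      case b
      then have "(\<lambda>s. (s, \<omega>)) -` y \<inter> space (restrict_space borel {0..}) = {0..} \<inter> (if \<omega> \<in> B then {s<..t} else {})"
        by (auto simp: space_restrict_space)
      then show ?thesis by (simp add: sets_restrict_space_iff)
    qed
  qed
  from measurable_comp[OF this P[unfolded predictable_def]]
  show ?thesis by (simp add: comp_def)
qed

definition A_density :: "(real \<Rightarrow> 'a \<Rightarrow> real) \<Rightarrow> ('a \<Rightarrow> ereal) \<Rightarrow> 'a \<Rightarrow> real \<Rightarrow> ennreal" where
  "A_density \<alpha> T \<omega> s = ennreal ((\<alpha> s \<omega>)\<^sup>2) * indicator {s. 0 < s \<and> ereal s \<le> T \<omega>} s"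

lemma A_enn_eq_cum_integral: "A_enn C \<alpha> T t \<omega> = cum_integral (dC C \<omega>) (A_density \<alpha> T \<omega>) t"
  unfolding A_enn_def cum_integral_def A_density_def
  by (intro nn_integral_cong) (auto split: split_indicator)

lemma A_density_measurable:
  assumes "(\<lambda>s. \<alpha> s \<omega>) \<in> borel_measurable (restrict_space borel {0..})"
  shows "A_density \<alpha> T \<omega> \<in> borel_measurable (dC C \<omega>)"
proof -
  \<comment> \<open>only the values on (0,\<infinity>) matter, where the path is Borel measurable\<close>
  define Y where "Y s = (if s \<in> {0..} then \<alpha> s \<omega> else 0)" for s
  have [measurable]: "Y \<in> borel_measurable borel"
    using assms unfolding Y_def by (subst (asm) measurable_restrict_space_iff) auto
  have "A_density \<alpha> T \<omega> = (\<lambda>s. ennreal ((Y s)\<^sup>2) * indicator {s. 0 < s \<and> ereal s \<le> T \<omega>} s)"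
    by (auto simp: A_density_def Y_def fun_eq_iff split: split_indicator)
  also have "\<dots> \<in> borel_measurable (dC C \<omega>)"
    unfolding dC_def measurable_cong_sets[OF sets_interval_measure refl] by measurable
  finally show ?thesis .
qed

lemma H2_integrand_bound:
  assumes m: "(\<lambda>s. \<alpha> s \<omega>) \<in> borel_measurable (restrict_space borel {0..})"
    and \<alpha>: "\<And>t. 0 \<le> t \<Longrightarrow> 0 \<le> \<alpha> t \<omega>"
    and finite: "\<forall>t\<ge>0. A_enn C \<alpha> T t \<omega> < \<infinity>"
    and jump: "\<forall>t\<ge>0. jump (A_proc C \<alpha> T) t \<omega> \<le> \<Phi>"
    and \<Phi>: "0 \<le> \<Phi>" and b1: "0 \<le> b1" and b12: "b1 < b2"
  shows "(\<integral>\<^sup>+ s. ennreal (stoch_exp b1 (A_proc C \<alpha> T) s \<omega>) * (ennreal (\<alpha> s \<omega>) * xi_star \<xi> T s \<omega>)\<^sup>2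
            * indicator {s. 0 < s \<and> ereal s \<le> T \<omega>} s \<partial>dC C \<omega>)
     \<le> ennreal ((1 + b2 * \<Phi>) * (1 + b1 * \<Phi>) / (b2 - b1))
       * (SUP s\<in>{0..}. ennreal (stoch_exp b2 (A_proc C \<alpha> T) s \<omega>) * (xi_pos_before \<xi> T s \<omega>)\<^sup>2)"
proof -
  let ?w = "A_density \<alpha> T \<omega>"
  let ?F = "\<lambda>t. enn2real (cum_integral (dC C \<omega>) ?w t)"
  have F: "(\<lambda>t. A_proc C \<alpha> T t \<omega>) = ?F"
    by (simp add: A_proc_def A_enn_eq_cum_integral)
  have integrand: "ennreal (stoch_exp b1 (A_proc C \<alpha> T) s \<omega>) * (ennreal (\<alpha> s \<omega>) * xi_star \<xi> T s \<omega>)\<^sup>2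
      * indicator {s. 0 < s \<and> ereal s \<le> T \<omega>} s
    = ennreal (doleans_exp b1 ?F s) * ?w s
      * (INF t\<in>{0..<s}. SUP u\<in>{t..}. xi_pos_before \<xi> T u \<omega>)\<^sup>2 * indicator {0<..} s" for s
  proof (cases "0 < s \<and> ereal s \<le> T \<omega>")
    case True
    then have "(ennreal (\<alpha> s \<omega>))\<^sup>2 = ennreal ((\<alpha> s \<omega>)\<^sup>2)"
      using \<alpha>[of s] by (simp add: ennreal_power)
    with True show ?thesis
      unfolding stoch_exp_eq_doleans_exp F A_density_def xi_star_def
      by (simp add: power_mult_distrib mult_ac)
  qed (auto simp: A_density_def)
  have "(\<integral>\<^sup>+ s. ennreal (stoch_exp b1 (A_proc C \<alpha> T) s \<omega>) * (ennreal (\<alpha> s \<omega>) * xi_star \<xi> T s \<omega>)\<^sup>2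
            * indicator {s. 0 < s \<and> ereal s \<le> T \<omega>} s \<partial>dC C \<omega>)
    = (\<integral>\<^sup>+ s. ennreal (doleans_exp b1 ?F s) * ?w s
      * (INF t\<in>{0..<s}. SUP u\<in>{t..}. xi_pos_before \<xi> T u \<omega>)\<^sup>2 * indicator {0<..} s \<partial>dC C \<omega>)"
    by (intro nn_integral_cong integrand)
  also have "\<dots>
    \<le> ennreal ((1 + b2 * \<Phi>) * (1 + b1 * \<Phi>) / (b2 - b1))
      * (SUP u\<in>{0..}. ennreal (doleans_exp b2 ?F u) * (xi_pos_before \<xi> T u \<omega>)\<^sup>2)"
    (is "_ \<le> ?bound")
  proof (rule nn_integral_doleans_exp_sq_le[OF _ _ _ _ \<Phi> b1 b12])
    show "sets (dC C \<omega>) = sets borel" unfolding dC_def by (rule sets_interval_measure)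
    show "?w \<in> borel_measurable (dC C \<omega>)" using m by (rule A_density_measurable)
    show "cum_integral (dC C \<omega>) ?w t < \<infinity>" if "0 \<le> t" for t
      using finite that by (simp add: A_enn_eq_cum_integral)
    show "path_jump ?F t \<le> \<Phi>" if "0 \<le> t" for t
      using jump that by (simp add: jump_eq_path_jump F)
  qed
  also have "?bound = ennreal ((1 + b2 * \<Phi>) * (1 + b1 * \<Phi>) / (b2 - b1))
       * (SUP s\<in>{0..}. ennreal (stoch_exp b2 (A_proc C \<alpha> T) s \<omega>) * (xi_pos_before \<xi> T s \<omega>)\<^sup>2)"
    by (simp only: stoch_exp_eq_doleans_exp F)
  finally show ?thesis .
qed

theorem mainTheorem12:
  fixes M :: "'a measure" and G :: "real \<Rightarrow> 'a measure"
    and T :: "'a \<Rightarrow> ereal" and C \<alpha> :: "real \<Rightarrow> 'a \<Rightarrow> real"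
    and \<xi> :: "real \<Rightarrow> 'a \<Rightarrow> ereal" and \<Phi> \<beta>hat \<beta>star :: real
  assumes "prob_space M"
    and "filtration_on M G" and "right_continuous_filtration G"
    and "universal_completion_sets (G_infty M G) \<subseteq> sets M"
    and "stopping_time_on M G T"
    and "predictable M G C"
    and "AE \<omega> in M. mono_on {0..} (\<lambda>t. C t \<omega>) \<and> (\<forall>t\<ge>0. continuous (at_right t) (\<lambda>s. C s \<omega>))"
    and "\<forall>\<omega>\<in>space M. C 0 \<omega> = 0"
    and "predictable M G \<alpha>"
    and "\<forall>t\<ge>0. \<forall>\<omega>\<in>space M. 0 \<le> \<alpha> t \<omega>"
    and "AE \<omega> in M. AE t in dC C \<omega>. 0 \<le> t \<and> ereal t \<le> T \<omega> \<longrightarrow> 0 < \<alpha> t \<omega>"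
    and "AE \<omega> in M. \<forall>t\<ge>0. A_enn C \<alpha> T t \<omega> < \<infinity>"
    and "0 \<le> \<Phi>"
    and "AE \<omega> in M. \<forall>t\<ge>0. jump (A_proc C \<alpha> T) t \<omega> \<le> \<Phi>"
    and "optional_ereal M G \<xi>"
    and "\<forall>t\<ge>0. \<forall>\<omega>\<in>space M. \<xi> t \<omega> \<noteq> \<infinity>"
    and "0 \<le> \<beta>hat" and "\<beta>hat < \<beta>star"
  shows "H2_norm_sq M C T (A_proc C \<alpha> T) \<beta>hat (\<lambda>s \<omega>. ennreal (\<alpha> s \<omega>) * xi_star \<xi> T s \<omega>)
         \<le> ennreal ((1 + \<beta>star * \<Phi>) * (1 + \<beta>hat * \<Phi>) / (\<beta>star - \<beta>hat))
           * (\<integral>\<^sup>+ \<omega>. (SUP s\<in>{0..}. ennreal (stoch_exp \<beta>star (A_proc C \<alpha> T) s \<omega>)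
                         * (xi_pos_before \<xi> T s \<omega>)\<^sup>2) \<partial>M)
     \<and> ((\<integral>\<^sup>+ \<omega>. (SUP s\<in>{0..}. ennreal (stoch_exp \<beta>star (A_proc C \<alpha> T) s \<omega>)
                         * (xi_pos_before \<xi> T s \<omega>)\<^sup>2) \<partial>M) < \<infinity>
        \<longrightarrow> H2_norm_sq M C T (A_proc C \<alpha> T) \<beta>hat (\<lambda>s \<omega>. ennreal (\<alpha> s \<omega>) * xi_star \<xi> T s \<omega>) < \<infinity>)"
proof -
  let ?S = "\<lambda>\<omega>. SUP s\<in>{0..}. ennreal (stoch_exp \<beta>star (A_proc C \<alpha> T) s \<omega>) * (xi_pos_before \<xi> T s \<omega>)\<^sup>2"
  define K where "K = (1 + \<beta>star * \<Phi>) * (1 + \<beta>hat * \<Phi>) / (\<beta>star - \<beta>hat)"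
  \<comment> \<open>The bound holds path by path; of the hypotheses only the measurability of the paths of
    \<alpha>, \<alpha> \<ge> 0, the finiteness of A and the jump bound are needed.\<close>
  have "AE \<omega> in M. (\<integral>\<^sup>+ s. ennreal (stoch_exp \<beta>hat (A_proc C \<alpha> T) s \<omega>)
      * (ennreal (\<alpha> s \<omega>) * xi_star \<xi> T s \<omega>)\<^sup>2 * indicator {s. 0 < s \<and> ereal s \<le> T \<omega>} s \<partial>dC C \<omega>)
    \<le> ennreal K * ?S \<omega>"
    using assms(12,14) AE_space
  proof eventually_elim
    case (elim \<omega>)
    show ?case unfolding K_def
      using assms(10,13,17,18) elim
      by (intro H2_integrand_bound predictable_path_measurable[OF assms(9,2)]) auto
  qed
  then have le: "H2_norm_sq M C T (A_proc C \<alpha> T) \<beta>hat (\<lambda>s \<omega>. ennreal (\<alpha> s \<omega>) * xi_star \<xi> T s \<omega>)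
      \<le> ennreal K * (\<integral>\<^sup>+ \<omega>. ?S \<omega> \<partial>M)"
    unfolding H2_norm_sq_def
    by (intro order.trans[OF nn_integral_mono_AE nn_integral_cmult_le]) simp_all
  moreover have "(\<integral>\<^sup>+ \<omega>. ?S \<omega> \<partial>M) < \<infinity> \<Longrightarrow> ennreal K * (\<integral>\<^sup>+ \<omega>. ?S \<omega> \<partial>M) < \<infinity>"
    by (simp add: ennreal_mult_less_top)
  ultimately show ?thesis
    unfolding K_def by (auto intro: le_less_trans)
qed

end
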